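(* Let $k$ and $r$ be positive integers with $r \ge 2$, $r \mid k$ and $k \ge 2r$. Let $\chi : \{1, 2, \ldots, rk-2r+1\} \to \{0,1\}$ be a 2-coloring such that $\chi(1) = 0$ and $\chi(r-1) = 1$. Suppose at least one of the following holds: (a) $\chi(r) = 0$; (b) $\chi(k-2) = 1$; (c) $\chi(k-1) = 0$; (d) $\chi(k) = 0$; (e) $\chi(rk-2r-1) = 0$; (f) $\chi(rk-2r+1) = 1$. Then there exists a solution $(\hat{x}_1, \ldots, \hat{x}_k)$ of the equation $x_1 + \cdots + x_{k-1} = x_k$ with all $\hat{x}_i \in \{1, \ldots, rk-2r+1\}$ such that $\sum_{i=1}^k \chi(\hat{x}_i) \equiv 0 \pmod r$.
   Context: Solutions of the equation $x_1 + \cdots + x_{k-1} = x_k$ are taken in positive integers. A solution $(\hat{x}_1,\ldots,\hat{x}_k)$ is called $r$-zero-sum under $\chi$ if $\sum_{i=1}^k \chi(\hat{x}_i) \equiv 0 \pmod r$. *)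

theory Defs
  imports Main
begin

definition is_solution_in :: "nat \<Rightarrow> nat \<Rightarrow> (nat \<Rightarrow> nat) \<Rightarrow> bool" where
  "is_solution_in k N x \<longleftrightarrow> (\<forall>i\<in>{1..k}. x i \<in> {1..N}) \<and> (\<Sum>i=1..k-1. x i) = x k"

definition zero_sum :: "nat \<Rightarrow> (nat \<Rightarrow> nat) \<Rightarrow> nat \<Rightarrow> (nat \<Rightarrow> nat) \<Rightarrow> bool" where
  "zero_sum r \<chi> k x \<longleftrightarrow> (\<Sum>i=1..k. \<chi> (x i)) mod r = 0"

end

theory Submission
  imports Defs
begin

(*
  It suffices to exhibit k - 1 summands in {1..N}, N = rk - 2r + 1, whose colours together with
  the colour of their sum add up to a multiple of r. The assumptions chi(1) = 0 and chi(r - 1) = 1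
  force r >= 3. Splitting on the colours of k - 1, N, r, N - 2, k - 2 and 2, each branch is settled
  by an explicit list of the numbers 1, 2, r - 1, r, k - 2, k - 1, whose colours are then known,
  with sum k - 1, N or N - 2. In the hardest branch the multiplicities come from writing r (r - 3)
  as a combination of k - r - 1, k - r - 2 and -1 with few terms.
*)

lemma zero_sum_solution_of_list:
  assumes "length xs = k - 1" "2 \<le> k" "set xs \<subseteq> {1..N}" "sum_list xs \<le> N"
    and "r dvd sum_list (map \<chi> xs) + \<chi> (sum_list xs)"
  shows "\<exists>x. is_solution_in k N x \<and> zero_sum r \<chi> k x"
proof -
  define x where "x i = (if i < k then xs ! (i - 1) else sum_list xs)" for i
  have sum_first: "(\<Sum>i=1..k-1. f (x i)) = sum_list (map f xs)" for f :: "nat \<Rightarrow> nat"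
  proof -
    have "(\<Sum>i=1..k-1. f (x i)) = (\<Sum>i<k-1. f (x (Suc i)))"
      by (simp add: sum.atLeast1_atMost_eq)
    also have "\<dots> = (\<Sum>i<length xs. f (xs ! i))"
      using assms(1) by (intro sum.cong) (auto simp: x_def)
    also have "\<dots> = sum_list (map f xs)"
      by (simp add: sum_list_sum_nth atLeast0LessThan)
    finally show ?thesis .
  qed
  have sum_all: "(\<Sum>i=1..k. f i) = (\<Sum>i=1..k-1. f i) + f k" for f :: "nat \<Rightarrow> nat"
    using assms(2) by (cases k) auto
  have "xs \<noteq> []" using assms(1,2) by auto
  then have "1 \<le> sum_list xs"
    using assms(3) by (cases xs) auto
  then have "x i \<in> {1..N}" if "i \<in> {1..k}" for i
    using that assms(1,3,4) nth_mem[of "i - 1" xs] by (force simp: x_def)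
  moreover have "x k = sum_list xs" by (simp add: x_def)
  ultimately have "is_solution_in k N x \<and> zero_sum r \<chi> k x"
    unfolding is_solution_in_def zero_sum_def
    using sum_first[of id] sum_first[of \<chi>] sum_all[of "\<lambda>i. \<chi> (x i)"] assms(5) by auto
  then show ?thesis by blast
qed

lemma exists_combination_Suc_D_D:
  fixes D n :: nat
  assumes "0 < D" "n < D * (D + 3)"
  shows "\<exists>a b c. a + b + c \<le> D + 2 \<and> a * (D + 1) + b * D = n + c"
proof -
  define q where "q = n div D"
  define m where "m = n mod D"
  have n_eq: "n = q * D + m"
    by (simp add: q_def m_def)
  have "m < D"
    using assms(1) by (simp add: m_def)
  have "q * D < (D + 3) * D"
    using assms(2) n_eq by (simp add: algebra_simps)
  then have "q \<le> D + 2"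
    by simp
  show ?thesis
  proof (cases "m \<le> q")
    case True
    then obtain t where "q = m + t"
      using le_Suc_ex by blast
    then have "m + t + 0 \<le> D + 2 \<and> m * (D + 1) + t * D = n + 0"
      using \<open>q \<le> D + 2\<close> n_eq by (simp add: algebra_simps)
    then show ?thesis by blast
  next
    case False
    obtain w where "D = m + w"
      using \<open>m < D\<close> less_imp_add_positive by blast
    then have "0 + (q + 1) + w \<le> D + 2 \<and> 0 * (D + 1) + (q + 1) * D = n + w"
      using False n_eq by (simp add: algebra_simps)
    then show ?thesis by blast
  qed
qed

locale coloured_equation =
  fixes r k :: nat and \<chi> :: "nat \<Rightarrow> nat"
  assumes r_ge_2: "2 \<le> r" and r_dvd_k: "r dvd k" and k_ge: "2 * r \<le> k"
    and chi_1: "\<chi> 1 = 0" and chi_r_minus_1: "\<chi> (r - 1) = 1"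
begin

abbreviation N where "N \<equiv> r * k - 2 * r + 1"

lemma r_ge_3: "3 \<le> r"
  using r_ge_2 chi_1 chi_r_minus_1 by (cases "r = 2") auto

lemma obtain_parameters:
  obtains s e where "r = s + 3" "k = 2 * s + 6 + e" "N = (s + 3) * (2 * s + 4 + e) + 1"
    and "r dvd e"
proof -
  obtain s where s: "r = s + 3" using r_ge_3 le_Suc_ex by (metis add.commute)
  obtain e where e: "k = 2 * r + e" using k_ge le_Suc_ex by blast
  have "r dvd e" using r_dvd_k by (simp add: e dvd_add_right_iff)
  moreover have "N = (s + 3) * (2 * s + 4 + e) + 1"
    by (simp add: s e algebra_simps)
  ultimately show thesis using that s e by simp
qed

lemma k_le_N: "k \<le> N"
proof -
  obtain s e where "r = s + 3" "k = 2 * s + 6 + e" "N = (s + 3) * (2 * s + 4 + e) + 1"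
    by (rule obtain_parameters)
  then show ?thesis by (simp add: algebra_simps)
qed

lemma solution_of_list:
  assumes "length xs = k - 1" "set xs \<subseteq> {1..N}" "sum_list xs \<le> N"
    and "r dvd sum_list (map \<chi> xs) + \<chi> (sum_list xs)"
  shows "\<exists>x. is_solution_in k N x \<and> zero_sum r \<chi> k x"
  using zero_sum_solution_of_list assms k_ge r_ge_2 by simp

lemma solution_ones:
  assumes "\<chi> (k - 1) = 0"
  shows "\<exists>x. is_solution_in k N x \<and> zero_sum r \<chi> k x"
proof -
  define xs where "xs = replicate (k - 1) (1::nat)"
  have "length xs = k - 1" "set xs \<subseteq> {1..N}" "sum_list xs = k - 1"
      "sum_list (map \<chi> xs) = 0"
    using chi_1 k_le_N k_ge r_ge_3 by (auto simp: xs_def sum_list_replicate)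
  then show ?thesis
    using assms k_le_N by (intro solution_of_list) (auto simp del: sum_list_eq_0_iff)
qed

lemma solution_k_minus_1_ones:
  assumes "\<chi> (k - 1) = 1" "\<chi> N = 1"
  shows "\<exists>x. is_solution_in k N x \<and> zero_sum r \<chi> k x"
proof -
  obtain s e where "r = s + 3" "k = 2 * s + 6 + e" "N = (s + 3) * (2 * s + 4 + e) + 1"
    by (rule obtain_parameters)
  moreover define xs where "xs = replicate (r - 1) (k - 1) @ replicate (k - r) 1"
  ultimately have "length xs = k - 1" "set xs \<subseteq> {1..N}" "sum_list xs = N"
      "sum_list (map \<chi> xs) = r - 1"
    using assms chi_1 by (auto simp: sum_list_replicate algebra_simps)
  then show ?thesis
    using assms r_ge_3 by (intro solution_of_list) auto
qed

lemma solution_one_r: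
  assumes "\<chi> r = 0" "\<chi> N = 0"
  shows "\<exists>x. is_solution_in k N x \<and> zero_sum r \<chi> k x"
proof -
  obtain s e where "r = s + 3" "k = 2 * s + 6 + e" "N = (s + 3) * (2 * s + 4 + e) + 1"
    by (rule obtain_parameters)
  moreover define xs where "xs = 1 # replicate (k - 2) r"
  ultimately have "length xs = k - 1" "set xs \<subseteq> {1..N}" "sum_list xs = N"
      "sum_list (map \<chi> xs) = 0"
    using assms chi_1 by (auto simp: sum_list_replicate algebra_simps)
  then show ?thesis
    using assms by (intro solution_of_list) (auto simp del: sum_list_eq_0_iff)
qed

lemma solution_r_minus_1_r:
  assumes "\<chi> r = 1" "\<chi> (N - 2) = 1"
  shows "\<exists>x. is_solution_in k N x \<and> zero_sum r \<chi> k x"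
proof -
  obtain s e where "r = s + 3" "k = 2 * s + 6 + e" "N = (s + 3) * (2 * s + 4 + e) + 1"
    by (rule obtain_parameters)
  moreover define xs where "xs = replicate (r + 1) (r - 1) @ replicate (k - r - 2) r"
  ultimately have "length xs = k - 1" "set xs \<subseteq> {1..N}" "sum_list xs = N - 2"
      "sum_list (map \<chi> xs) = k - 1"
    using assms chi_r_minus_1 by (auto simp: sum_list_replicate algebra_simps)
  then show ?thesis
    using assms r_dvd_k r_ge_3 k_ge by (intro solution_of_list) (auto simp: Suc_diff_1)
qed

lemma solution_k_minus_2_twos_ones:
  assumes "\<chi> 2 = 0" "\<chi> (k - 2) = 0" "\<chi> (N - 2) = 0"
  shows "\<exists>x. is_solution_in k N x \<and> zero_sum r \<chi> k x"
proof -
  obtain s e where "r = s + 3" "k = 2 * s + 6 + e" "N = (s + 3) * (2 * s + 4 + e) + 1"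
    by (rule obtain_parameters)
  moreover define xs where
    "xs = replicate (r - 1) (k - 2) @ replicate (r - 3) 2 @ replicate (k - 2 * r + 3) 1"
  ultimately have "length xs = k - 1" "set xs \<subseteq> {1..N}" "sum_list xs = N - 2"
      "sum_list (map \<chi> xs) = 0"
    using assms chi_1 by (auto simp: sum_list_replicate algebra_simps)
  then show ?thesis
    using assms by (intro solution_of_list) (auto simp del: sum_list_eq_0_iff)
qed

lemma solution_k_minus_2_r_minus_1_twos:
  assumes "\<chi> 2 = 1" "\<chi> (k - 2) = 0" "\<chi> (N - 2) = 0"
  shows "\<exists>x. is_solution_in k N x \<and> zero_sum r \<chi> k x"
proof -
  obtain s e where "r = s + 3" "k = 2 * s + 6 + e" "N = (s + 3) * (2 * s + 4 + e) + 1"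
    and "r dvd e" by (rule obtain_parameters)
  moreover define xs where
    "xs = replicate (r - 2) (k - 2) @ replicate 2 (r - 1) @ replicate (k - r - 2) 2 @ [1]"
  ultimately have "length xs = k - 1" "set xs \<subseteq> {1..N}" "sum_list xs = N - 2"
      "sum_list (map \<chi> xs) = r + e"
    using assms chi_1 chi_r_minus_1 by (auto simp: sum_list_replicate algebra_simps)
  then show ?thesis
    using assms \<open>r dvd e\<close> by (intro solution_of_list) auto
qed

lemma solution_mixed:
  assumes "\<chi> r = 1" "\<chi> (k - 1) = 1" "\<chi> (k - 2) = 1" "\<chi> (N - 2) = 0"
  shows "\<exists>x. is_solution_in k N x \<and> zero_sum r \<chi> k x"
proof -
  obtain s e where r_eq: "r = s + 3" and k_eq: "k = 2 * s + 6 + e"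
    and N_eq: "N = (s + 3) * (2 * s + 4 + e) + 1" and "r dvd e"
    by (rule obtain_parameters)
  \<comment> \<open>All summands except the \<open>r - 1\<close> ones have colour 1, so the colour sum is
    \<open>k - r\<close>. Starting from \<open>k - r\<close> copies of \<open>r\<close>, trading copies for \<open>k - 1\<close>, \<open>k - 2\<close>
    or \<open>r - 1\<close> changes the sum by \<open>D + 1\<close>, \<open>D\<close> or \<open>-1\<close>; the excess \<open>r (r - 3)\<close>
    needed to reach \<open>N - 2\<close> is distributed by \<open>exists_combination_Suc_D_D\<close>.\<close>
  define D where "D = k - r - 2"
  have "0 < D" "r * (r - 3) < D * (D + 3)"
    unfolding D_def r_eq k_eq by (simp_all add: algebra_simps)
  then obtain a b c where abc: "a + b + c \<le> D + 2" "a * (D + 1) + b * D = r * (r - 3) + c"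
    using exists_combination_Suc_D_D by blast
  then obtain j where j: "a + b + c + j = D + 2"
    using le_add_diff_inverse by blast
  define xs where "xs = replicate (r - 1) 1 @ replicate a (k - 1) @ replicate b (k - 2)
    @ replicate c (r - 1) @ replicate j r"
  have "sum_list xs + c = r - 1 + r * (a + b + c + j) + (a * (D + 1) + b * D)"
    unfolding xs_def D_def r_eq k_eq by (simp add: sum_list_replicate algebra_simps)
  then have "sum_list xs = r - 1 + r * (D + 2) + r * (r - 3)"
    using abc(2) j by simp
  also have "\<dots> = N - 2"
    using N_eq r_eq k_eq D_def by (simp add: algebra_simps)
  finally have "sum_list xs = N - 2" .
  moreover have "length xs = k - 1"
    using j unfolding xs_def D_def r_eq k_eq by simp
  moreover have "set xs \<subseteq> {1..N}"
    using k_le_N k_ge r_ge_3 unfolding xs_def by auto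
  moreover have "sum_list (map \<chi> xs) = D + 2"
    using j assms chi_1 chi_r_minus_1 unfolding xs_def by (simp add: sum_list_replicate)
  moreover have "r dvd D + 2"
  proof -
    have "D + 2 = r + e"
      unfolding D_def r_eq k_eq by simp
    then show ?thesis
      using \<open>r dvd e\<close> by simp
  qed
  ultimately show ?thesis
    using assms by (intro solution_of_list) auto
qed

end

theorem lemma2:
  fixes k r :: nat and \<chi> :: "nat \<Rightarrow> nat"
  assumes "r \<ge> 2" and "r dvd k" and "k \<ge> 2 * r"
    and "\<forall>i\<in>{1..r*k - 2*r + 1}. \<chi> i \<in> {0, 1}"
    and "\<chi> 1 = 0" and "\<chi> (r - 1) = 1"
    and "\<chi> r = 0 \<or> \<chi> (k - 2) = 1 \<or> \<chi> (k - 1) = 0 \<or> \<chi> k = 0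
         \<or> \<chi> (r*k - 2*r - 1) = 0 \<or> \<chi> (r*k - 2*r + 1) = 1"
  shows "\<exists>x. is_solution_in k (r*k - 2*r + 1) x \<and> zero_sum r \<chi> k x"
proof -
  \<comment> \<open>The disjunction (a)--(f) is not needed: the case split below covers every colouring.\<close>
  interpret coloured_equation r k \<chi>
    using assms(1-3,5,6) by unfold_locales
  have binary: "\<chi> v = 0 \<or> \<chi> v = 1" if "1 \<le> v" "v \<le> N" for v
    using assms(4) that by auto
  have "\<chi> (k - 1) = 0 \<or> \<chi> (k - 1) = 1" "\<chi> (k - 2) = 0 \<or> \<chi> (k - 2) = 1"
    "\<chi> r = 0 \<or> \<chi> r = 1" "\<chi> 2 = 0 \<or> \<chi> 2 = 1"
    "\<chi> N = 0 \<or> \<chi> N = 1" "\<chi> (N - 2) = 0 \<or> \<chi> (N - 2) = 1"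
    using binary k_le_N k_ge r_ge_3 by auto
  then show ?thesis
    using solution_ones solution_k_minus_1_ones solution_one_r solution_r_minus_1_r
      solution_mixed solution_k_minus_2_twos_ones solution_k_minus_2_r_minus_1_twos
    by blast
qed

end
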